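(* In the PSP-PPP with half-length density $f_H$ ($0<\mathbb{E}[H]<\infty$), the Laplace transform $\mathcal{L}_{I_o^m}(s)=\mathbb{E}[e^{-sI_o^m}]$ of the interference from the vehicles on the stick(s) passing through the typical vehicle of order $m\in\{2,4\}$ is $$\mathcal{L}_{I_o^m}(s)=\Bigl(\int_0^\infty\Bigl(\frac1{2h}\int_{-h}^h\exp\Bigl(-\lambda p s^{\delta/2}\int_{(-w-h)s^{-\delta/2}}^{(-w+h)s^{-\delta/2}}\frac{\mathrm{d}v}{1+|v|^{2/\delta}}\Bigr)\mathrm{d}w\Bigr)\tilde f_H(h)\,\mathrm{d}h\Bigr)^{m/2},$$ where $\tilde f_H(h)=hf_H(h)/\mathbb{E}[H]$.
   Context: PSP: sticks $S(y,\varphi,h)=[y-hu(\varphi),y+hu(\varphi)]$, $u(\varphi)=(\cos\varphi,\sin\varphi)$, with midpoints a homogeneous PPP of intensity $\mu$ in $\mathbb{R}^2$, i.i.d. uniform orientations on $[0,\pi)$, i.i.d. half-lengths with density $f_H$, all independent. PSP-PPP: conditionally on the sticks, vehicles form independent homogeneous 1D PPPs of intensity $\lambda$ on each stick. Typical vehicle of order $m\in\{2,4\}$: a vehicle at the origin $o$ lying on $m/2$ sticks through $o$; these sticks are independent, each with half-length of density $\tilde f_H$ and with the origin at signed distance $W\sim\mathrm{Unif}(-H,H)$ from the stick's midpoint (given half-length $H$); the rest is an independent copy of the stationary PSP-PPP. Each vehicle $z\neq o$ is active independently with probability $p$ ($B_z$ i.i.d. Bernoulli$(p)$), fading gains $g_z$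 i.i.d. exponential with mean 1, path-loss exponent $\alpha>2$, $\delta=2/\alpha$. $I_o^m=\sum_{z\in\mathcal{V}_o^m}g_z\|z\|^{-\alpha}B_z$, where $\mathcal{V}_o^m$ is the set of vehicles (other than the one at $o$) on the sticks through $o$. *)

theory Defs
  imports "HOL-Probability.Probability"
begin

definition udir :: "real \<Rightarrow> real \<times> real" where
  "udir \<phi> = (cos \<phi>, sin \<phi>)"

definition poisson_measure :: "real \<Rightarrow> nat measure" where
  "poisson_measure r =
     density (count_space UNIV) (\<lambda>k. ennreal ((max 0 r) ^ k / fact k * exp (- max 0 r)))"

definition mean_half_length :: "(real \<Rightarrow> real) \<Rightarrow> real" where
  "mean_half_length fH = (\<integral>h. h * fH h \<partial>lborel)"

definition tilde_fH :: "(real \<Rightarrow> real) \<Rightarrow> real \<Rightarrow> real" where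
  "tilde_fH fH h = h * fH h / mean_half_length fH"

text \<open>Marks of a vehicle on a stick of half-length h: its position t along the stick
  (measured from the midpoint, uniform on [-h,h]), its activity indicator B (Bernoulli p)
  and its fading gain g (exponential with mean 1), all independent.\<close>
definition mark_space :: "(real \<times> bool \<times> real) measure" where
  "mark_space = borel \<Otimes>\<^sub>M (count_space UNIV \<Otimes>\<^sub>M borel)"

definition mark_law :: "real \<Rightarrow> real \<Rightarrow> (real \<times> bool \<times> real) measure" where
  "mark_law p h = uniform_measure lborel {-h..h} \<Otimes>\<^sub>M
      (measure_pmf (bernoulli_pmf p) \<Otimes>\<^sub>M density lborel (\<lambda>x. ennreal (exponential_density 1 x)))"

text \<open>Sample space of one stick through the origin: (half-length h, offset w of the origin
  from the midpoint, orientation phi, number n of vehicles, i.i.d. marks of the vehicles;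
  only the first n entries of the stream are used).\<close>
definition stick_space :: "(real \<times> real \<times> real \<times> nat \<times> (real \<times> bool \<times> real) stream) measure" where
  "stick_space = borel \<Otimes>\<^sub>M (borel \<Otimes>\<^sub>M (borel \<Otimes>\<^sub>M (count_space UNIV \<Otimes>\<^sub>M stream_space mark_space)))"

text \<open>Law of a stick through the typical vehicle: half-length with density tilde_fH,
  offset W ~ Unif(-H,H) given H, orientation uniform on [0,pi), and conditionally on these
  the (Palm) vehicles other than o form a PPP of intensity lam on the stick, realised as
  N ~ Poisson(2 h lam) i.i.d. uniformly placed, independently marked points.\<close>
definition typical_stick_law ::
    "real \<Rightarrow> real \<Rightarrow> (real \<Rightarrow> real) \<Rightarrow> (real \<times> real \<times> real \<times> nat \<times> (real \<times> bool \<times> real) stream) measure" where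
  "typical_stick_law lam p fH =
     restrict_space (density lborel (\<lambda>h. ennreal (tilde_fH fH h))) {0<..} \<bind> (\<lambda>h.
     uniform_measure lborel {-h..h} \<bind> (\<lambda>w.
     uniform_measure lborel {0..<pi} \<bind> (\<lambda>\<phi>.
     poisson_measure (2 * h * lam) \<bind> (\<lambda>n.
     stream_space (mark_law p h) \<bind> (\<lambda>xs.
     return stick_space (h, w, \<phi>, n, xs))))))"

text \<open>Position of the vehicle with along-stick coordinate t on the stick with midpoint
  y = - w u(phi) (so that the origin o = y + w u(phi) lies on the stick).\<close>
definition vehicle_pos :: "real \<Rightarrow> real \<Rightarrow> real \<Rightarrow> real \<times> real" where
  "vehicle_pos w \<phi> t = (t - w) *\<^sub>R udir \<phi>"

definition stick_interference ::
    "real \<Rightarrow> real \<times> real \<times> real \<times> nat \<times> (real \<times> bool \<times> real) stream \<Rightarrow> real" where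
  "stick_interference \<alpha> \<omega> =
     (case \<omega> of (h, w, \<phi>, n, xs) \<Rightarrow>
        (\<Sum>i<n. case xs !! i of (t, b, g) \<Rightarrow>
            g * norm (vehicle_pos w \<phi> t) powr (- \<alpha>) * (if b then 1 else 0)))"

text \<open>Typical vehicle of order m: m div 2 independent sticks through o.
  The interference I_o^m and its Laplace transform E[exp(-s I_o^m)].\<close>
definition typical_config_law :: "nat \<Rightarrow> real \<Rightarrow> real \<Rightarrow> (real \<Rightarrow> real) \<Rightarrow>
    (nat \<Rightarrow> real \<times> real \<times> real \<times> nat \<times> (real \<times> bool \<times> real) stream) measure" where
  "typical_config_law m lam p fH = PiM {..<m div 2} (\<lambda>_. typical_stick_law lam p fH)"

definition interference_o :: "nat \<Rightarrow> real \<Rightarrow>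
    (nat \<Rightarrow> real \<times> real \<times> real \<times> nat \<times> (real \<times> bool \<times> real) stream) \<Rightarrow> real" where
  "interference_o m \<alpha> \<omega> = (\<Sum>k<m div 2. stick_interference \<alpha> (\<omega> k))"

definition laplace_interference :: "nat \<Rightarrow> real \<Rightarrow> real \<Rightarrow> (real \<Rightarrow> real) \<Rightarrow> real \<Rightarrow> real \<Rightarrow> real" where
  "laplace_interference m lam p fH \<alpha> s =
     (\<integral>\<omega>. exp (- s * interference_o m \<alpha> \<omega>) \<partial>typical_config_law m lam p fH)"

end

theory Submission
  imports Defs
begin

text \<open>
  Given its half-length h, the offset w of o from its midpoint and its orientation, a stick
  through o carries N ~ Poisson(2 lam h) further vehicles at i.i.d. uniform positions t with
  i.i.d. marks. An Exp(1) fading gain g has E exp(-a g) = 1 / (1 + a), so a vehicle at t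
  contributes the factor 1 - p Q(t) with Q(t) = s |t - w|^(-alpha) / (1 + s |t - w|^(-alpha))
  = rayleigh_deficit alpha s w t, and the generating function of N turns the mean of these factors
  into exp (- lam p (integral of Q over [-h, h])). The substitution v = (t - w) s^(-delta/2)
  puts this integral into the form of the statement; averaging over w and over the length-biased
  half-length gives the Laplace transform of one stick, and the m/2 independent sticks through
  o multiply it.
\<close>

section \<open>Product, stream and uniform measures\<close>

lemma distr_PiM_const_prob_space:
  fixes I :: "'i set"
  assumes M: "prob_space M" and f[measurable]: "f \<in> M \<rightarrow>\<^sub>M N"
  shows "distr (PiM I (\<lambda>_. M)) (PiM I (\<lambda>_. N)) (\<lambda>x. \<lambda>i\<in>I. f (x i)) = PiM I (\<lambda>_. distr M N f)"
proof -
  interpret M: prob_space M by (rule M)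
  interpret P: product_prob_space "\<lambda>_. M" I ..
  interpret D: product_prob_space "\<lambda>_. distr M N f" I
    by (rule product_prob_spaceI, rule M.prob_space_distr[OF f])
  show ?thesis
  proof (rule D.PiM_eq)
    show "sets (distr (PiM I (\<lambda>_. M)) (PiM I (\<lambda>_. N)) (\<lambda>x. \<lambda>i\<in>I. f (x i))) = sets (PiM I (\<lambda>_. distr M N f))"
      by (subst sets_distr, rule sets_PiM_cong) simp_all
    fix J F assume J: "finite J" "J \<subseteq> I" and F: "\<And>j. j \<in> J \<Longrightarrow> F j \<in> sets (distr M N f)"
    have F_sets[measurable]: "j \<in> J \<Longrightarrow> F j \<in> sets N" for j
      using F by simp
    have emb: "prod_emb I (\<lambda>_. distr M N f) J X = prod_emb I (\<lambda>_. N) J X" for X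
      by (simp add: prod_emb_def)
    have "prod_emb I (\<lambda>_. N) J (Pi\<^sub>E J F) \<in> sets (PiM I (\<lambda>_. N))"
      using J by (intro sets_PiM_I) auto
    moreover have "(\<lambda>x. \<lambda>i\<in>I. f (x i)) -` prod_emb I (\<lambda>_. N) J (Pi\<^sub>E J F) \<inter> space (PiM I (\<lambda>_. M))
        = prod_emb I (\<lambda>_. M) J (Pi\<^sub>E J (\<lambda>j. f -` F j \<inter> space M))"
      using J measurable_space[OF f] by (auto simp: prod_emb_def space_PiM PiE_iff subset_eq)
    ultimately have "emeasure (distr (PiM I (\<lambda>_. M)) (PiM I (\<lambda>_. N)) (\<lambda>x. \<lambda>i\<in>I. f (x i)))
          (prod_emb I (\<lambda>_. distr M N f) J (Pi\<^sub>E J F))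
        = emeasure (PiM I (\<lambda>_. M)) (prod_emb I (\<lambda>_. M) J (Pi\<^sub>E J (\<lambda>j. f -` F j \<inter> space M)))"
      unfolding emb by (subst emeasure_distr) auto
    also have "\<dots> = (\<Prod>j\<in>J. emeasure M (f -` F j \<inter> space M))"
      using J by (intro P.emeasure_PiM_emb) auto
    also have "\<dots> = (\<Prod>j\<in>J. emeasure (distr M N f) (F j))"
      by (intro prod.cong refl emeasure_distr[symmetric]) auto
    finally show "emeasure (distr (PiM I (\<lambda>_. M)) (PiM I (\<lambda>_. N)) (\<lambda>x. \<lambda>i\<in>I. f (x i)))
        (prod_emb I (\<lambda>_. distr M N f) J (Pi\<^sub>E J F)) = (\<Prod>j\<in>J. emeasure (distr M N f) (F j))" .
  qed
qed

lemma stream_space_distr: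
  assumes M: "prob_space M" and f[measurable]: "f \<in> M \<rightarrow>\<^sub>M N"
  shows "stream_space (distr M N f) = distr (stream_space M) (stream_space N) (smap f)"
proof -
  have [measurable]: "(\<lambda>x i. f (x i)) \<in> PiM UNIV (\<lambda>_. M) \<rightarrow>\<^sub>M PiM UNIV (\<lambda>_. N)"
    by (rule measurable_restrict[of UNIV, unfolded restrict_UNIV]) measurable
  have "stream_space (distr M N f) = distr (PiM UNIV (\<lambda>_. distr M N f)) (stream_space N) to_stream"
    by (subst stream_space_eq_distr) (intro distr_cong sets_stream_space_cong; simp)
  also have "\<dots> = distr (distr (PiM UNIV (\<lambda>_. M)) (PiM UNIV (\<lambda>_. N)) (\<lambda>x i. f (x i))) (stream_space N) to_stream"
    unfolding distr_PiM_const_prob_space[OF M f, of UNIV, unfolded restrict_UNIV] ..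
  also have "\<dots> = distr (PiM UNIV (\<lambda>_. M)) (stream_space N) (to_stream \<circ> (\<lambda>x i. f (x i)))"
    by (intro distr_distr) measurable
  also have "to_stream \<circ> (\<lambda>x i. f (x i)) = smap f \<circ> to_stream"
    by (simp add: fun_eq_iff to_stream_def stream.map_comp comp_def)
  also have "distr (PiM UNIV (\<lambda>_. M)) (stream_space N) (smap f \<circ> to_stream)
      = distr (distr (PiM UNIV (\<lambda>_. M)) (stream_space M) to_stream) (stream_space N) (smap f)"
    by (intro distr_distr[symmetric]) measurable
  also have "distr (PiM UNIV (\<lambda>_. M)) (stream_space M) to_stream = stream_space M"
    by (rule stream_space_eq_distr[symmetric])
  finally show ?thesis .
qed

text \<open>Scaling from h = 1 is what makes h \<mapsto> uniform_measure lborel {-h..h} and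
  h \<mapsto> stream_space (mark_law p h) measurable kernels.\<close>

lemma uniform_measure_interval_scale:
  fixes h :: real
  assumes h: "0 < h"
  shows "uniform_measure lborel {-h..h} = distr (uniform_measure lborel {-1..1}) borel (\<lambda>t. h * t)"
proof (rule measure_eqI)
  fix A assume "A \<in> sets (uniform_measure lborel {-h..h})"
  then have A[measurable]: "A \<in> sets borel" by simp
  define X where "X = emeasure lborel ((\<lambda>t. h * t) -` A \<inter> {-1..1})"
  have "X \<le> emeasure lborel {-1..1::real}"
    unfolding X_def by (intro emeasure_mono) auto
  then have X_fin: "X \<noteq> \<top>"
    by (auto simp: top_unique)
  have scale: "indicator ({-h..h} \<inter> A) (h * x) = (indicator ((\<lambda>t. h * t) -` A \<inter> {-1..1}) x :: ennreal)" for x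
    using mult_le_cancel_left_pos[OF h, of "-1" x] mult_le_cancel_left_pos[OF h, of x 1]
    by (auto split: split_indicator)
  have preimage: "(\<lambda>t. h * t) -` A \<in> sets borel"
    using measurable_sets_borel[of "\<lambda>t. h * t" borel A] by simp
  have "emeasure (uniform_measure lborel {-h..h}) A = emeasure lborel ({-h..h} \<inter> A) / ennreal (2 * h)"
    using h by simp
  also have "emeasure lborel ({-h..h} \<inter> A) = (\<integral>\<^sup>+x. indicator ({-h..h} \<inter> A) x \<partial>lborel)"
    by simp
  also have "\<dots> = ennreal h * (\<integral>\<^sup>+x. indicator ({-h..h} \<inter> A) (h * x) \<partial>lborel)"
    using h by (subst nn_integral_real_affine[where c=h and t=0]) auto
  also have "\<dots> = ennreal h * X"
    unfolding scale X_def using preimage by simp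
  also have "ennreal h * X / ennreal (2 * h) = X / 2"
    using h X_fin by (simp add: ennreal_mult mult.commute[of "ennreal h"] divide_mult_eq)
  also have "X / 2 = emeasure (distr (uniform_measure lborel {-1..1}) borel (\<lambda>t. h * t)) A"
    unfolding X_def using preimage by (subst emeasure_distr) (auto simp: Int_commute)
  finally show "emeasure (uniform_measure lborel {-h..h}) A = emeasure (distr (uniform_measure lborel {-1..1}) borel (\<lambda>t. h * t)) A" .
qed simp

lemma nn_integral_bind_prob_kernel:
  assumes K: "K \<in> N \<rightarrow>\<^sub>M prob_algebra S" and sets_M: "sets M = sets N"
    and f: "f \<in> borel_measurable S"
  shows "(\<integral>\<^sup>+y. f y \<partial>(M \<bind> K)) = (\<integral>\<^sup>+x. \<integral>\<^sup>+y. f y \<partial>K x \<partial>M)"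
proof (rule nn_integral_bind[OF f])
  show "K \<in> M \<rightarrow>\<^sub>M subprob_algebra S"
    using measurable_prob_algebraD[OF K] by (simp add: measurable_cong_sets[OF sets_M refl])
qed

lemma set_integrable_bounded_interval:
  fixes k :: "real \<Rightarrow> real"
  assumes "k \<in> borel_measurable borel" and "\<And>t. t \<in> {a..b} \<Longrightarrow> \<bar>k t\<bar> \<le> B"
  shows "set_integrable lborel {a..b} k"
proof -
  have "emeasure lborel {a..b} < \<top>"
    by (cases "a \<le> b") auto
  then show ?thesis
    unfolding set_integrable_def using assms
    by (intro integrableI_bounded_set_indicator[where B=B]) auto
qed

lemma set_integral_interval_bounds:
  fixes k :: "real \<Rightarrow> real"
  assumes [measurable]: "k \<in> borel_measurable borel"
    and k: "\<And>t. t \<in> {a..b} \<Longrightarrow> 0 \<le> k t \<and> k t \<le> B" and ab: "a \<le> b"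
  shows "0 \<le> (LINT t:{a..b}|lborel. k t) \<and> (LINT t:{a..b}|lborel. k t) \<le> B * (b - a)"
proof
  show "0 \<le> (LINT t:{a..b}|lborel. k t)"
    using k by (auto simp: set_lebesgue_integral_def intro!: integral_nonneg split: split_indicator)
  have "0 \<le> B"
    using k[of a] ab by auto
  then have "(LINT t:{a..b}|lborel. k t) \<le> (LINT t:{a..b}|lborel. B)"
    using k by (intro set_integral_mono set_integrable_bounded_interval[where B=B]) auto
  also have "\<dots> = B * (b - a)"
    using ab by (simp add: set_integral_const)
  finally show "(LINT t:{a..b}|lborel. k t) \<le> B * (b - a)" .
qed

lemma nn_integral_uniform_measure_interval:
  fixes k :: "real \<Rightarrow> real"
  assumes [measurable]: "k \<in> borel_measurable borel"
    and k: "\<And>t. t \<in> {a..b} \<Longrightarrow> 0 \<le> k t \<and> k t \<le> B" and ab: "a < b"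
  shows "(\<integral>\<^sup>+t. ennreal (k t) \<partial>uniform_measure lborel {a..b}) = ennreal ((LINT t:{a..b}|lborel. k t) / (b - a))"
proof -
  have "integrable lborel (\<lambda>t. indicator {a..b} t *\<^sub>R k t)"
    using set_integrable_bounded_interval[where B=B] k unfolding set_integrable_def by force
  then have "(\<integral>\<^sup>+t. ennreal (k t) * indicator {a..b} t \<partial>lborel) = ennreal (LINT t:{a..b}|lborel. k t)"
    unfolding set_lebesgue_integral_def using k
    by (subst nn_integral_eq_integral[symmetric]) (auto intro!: nn_integral_cong split: split_indicator)
  moreover have "0 \<le> (LINT t:{a..b}|lborel. k t)"
    using set_integral_interval_bounds[of k a b B] k ab by simp
  ultimately show ?thesis
    using ab by (simp add: nn_integral_uniform_measure divide_ennreal)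
qed

lemma borel_measurable_set_integral_interval:
  fixes f :: "'a \<Rightarrow> real \<Rightarrow> real"
  assumes f: "(\<lambda>x. f (fst x) (snd x)) \<in> borel_measurable (M \<Otimes>\<^sub>M borel)"
    and [measurable]: "a \<in> borel_measurable M" "b \<in> borel_measurable M"
  shows "(\<lambda>x. LINT t:{a x..b x}|lborel. f x t) \<in> borel_measurable M"
proof -
  have [measurable]: "(\<lambda>x. f (fst x) (snd x)) \<in> borel_measurable (M \<Otimes>\<^sub>M lborel)"
    using f by (subst measurable_cong_sets[OF sets_pair_measure_cong refl]) auto
  have "(\<lambda>x. (if a (fst x) \<le> snd x \<and> snd x \<le> b (fst x) then 1 else 0) * f (fst x) (snd x))
      \<in> borel_measurable (M \<Otimes>\<^sub>M lborel)"
    by measurable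
  then have "(\<lambda>x. \<integral>t. indicator {a x..b x} t *\<^sub>R f x t \<partial>lborel) \<in> borel_measurable M"
    by (intro lborel.borel_measurable_lebesgue_integral) (simp add: split_beta' indicator_def)
  then show ?thesis
    by (simp add: set_lebesgue_integral_def)
qed

lemma nn_integral_stream_space_prod:
  assumes M: "prob_space M" and [measurable]: "g \<in> borel_measurable M"
  shows "(\<integral>\<^sup>+xs. (\<Prod>i<n. g (xs !! i)) \<partial>stream_space M) = (\<integral>\<^sup>+x. g x \<partial>M) ^ n"
proof (induction n)
  case 0
  interpret S: prob_space "stream_space M"
    by (rule prob_space.prob_space_stream_space[OF M])
  show ?case
    by (simp add: S.emeasure_space_1)
next
  case (Suc n)
  interpret prob_space M by (rule M)
  have "(\<integral>\<^sup>+xs. (\<Prod>i<Suc n. g (xs !! i)) \<partial>stream_space M)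
      = (\<integral>\<^sup>+x. \<integral>\<^sup>+xs. g x * (\<Prod>i<n. g (xs !! i)) \<partial>stream_space M \<partial>M)"
    by (subst nn_integral_stream_space) (simp_all del: prod.lessThan_Suc add: prod.lessThan_Suc_shift)
  also have "\<dots> = (\<integral>\<^sup>+x. g x \<partial>M) * (\<integral>\<^sup>+x. g x \<partial>M) ^ n"
    by (simp add: nn_integral_cmult Suc.IH nn_integral_multc)
  finally show ?case
    by simp
qed

lemma nn_integral_exp_exponential_density:
  fixes l a :: real
  assumes l: "0 < l" and a: "0 \<le> a"
  shows "(\<integral>\<^sup>+g. ennreal (exp (- a * g)) \<partial>density lborel (exponential_density l)) = ennreal (l / (l + a))"
proof -
  have density: "ennreal (exponential_density l g) * ennreal (exp (- (a * g)))
      = ennreal (l / (l + a)) * ennreal (exponential_density (l + a) g)" for g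
  proof -
    have "exponential_density l g * exp (- (a * g)) = l / (l + a) * exponential_density (l + a) g"
      using l a by (simp add: exponential_density_def exp_add[symmetric] field_simps add_pos_nonneg)
    then show ?thesis
      using l a by (simp add: ennreal_mult[symmetric] exponential_density_nonneg del: ennreal_mult)
  qed
  have "(\<integral>\<^sup>+g. ennreal (exponential_density (l + a) g) \<partial>lborel) = 1"
    using prob_space.emeasure_space_1[OF prob_space_exponential_density, of "l + a"] l a
    by (simp add: emeasure_density)
  then have "(\<integral>\<^sup>+g. ennreal (l / (l + a)) * ennreal (exponential_density (l + a) g) \<partial>lborel) = ennreal (l / (l + a))"
    by (simp add: nn_integral_cmult)
  moreover have "(\<integral>\<^sup>+g. ennreal (exp (- a * g)) \<partial>density lborel (exponential_density l))
      = (\<integral>\<^sup>+g. ennreal (l / (l + a)) * ennreal (exponential_density (l + a) g) \<partial>lborel)"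
    using l by (subst nn_integral_density) (auto simp: density exponential_density_nonneg)
  ultimately show ?thesis
    by simp
qed

lemma nn_integral_PiM_exp_sum:
  fixes g :: "'a \<Rightarrow> real"
  assumes M: "prob_space M" and I: "finite I" and [measurable]: "g \<in> borel_measurable M"
  shows "(\<integral>\<^sup>+\<omega>. ennreal (exp (- s * (\<Sum>k\<in>I. g (\<omega> k)))) \<partial>PiM I (\<lambda>_. M))
    = (\<integral>\<^sup>+x. ennreal (exp (- s * g x)) \<partial>M) ^ card I"
proof -
  interpret product_prob_space "\<lambda>_. M" I
    using M by (intro product_prob_spaceI)
  have "(\<integral>\<^sup>+\<omega>. ennreal (exp (- s * (\<Sum>k\<in>I. g (\<omega> k)))) \<partial>PiM I (\<lambda>_. M))
      = (\<integral>\<^sup>+\<omega>. (\<Prod>k\<in>I. ennreal (exp (- s * g (\<omega> k)))) \<partial>PiM I (\<lambda>_. M))"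
    using I by (simp add: sum_distrib_left exp_sum prod_ennreal)
  also have "\<dots> = (\<Prod>k\<in>I. \<integral>\<^sup>+x. ennreal (exp (- s * g x)) \<partial>M)"
    using I by (intro product_nn_integral_prod) auto
  finally show ?thesis
    by simp
qed

section \<open>The Poisson distribution\<close>

lemma nn_integral_poisson_measure_power:
  fixes r c :: real
  assumes r: "0 \<le> r" and c: "0 \<le> c"
  shows "(\<integral>\<^sup>+k. ennreal (c ^ k) \<partial>poisson_measure r) = ennreal (exp (r * c - r))"
proof -
  have "(\<lambda>k. exp (- r) * ((r * c) ^ k /\<^sub>R fact k)) sums (exp (- r) * exp (r * c))"
    by (rule sums_mult[OF exp_converges])
  moreover have "exp (- r) * ((r * c) ^ k /\<^sub>R fact k) = r ^ k / fact k * exp (- r) * c ^ k" for k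
    by (simp add: power_mult_distrib divide_inverse mult_ac)
  ultimately have sums: "(\<lambda>k. r ^ k / fact k * exp (- r) * c ^ k) sums exp (r * c - r)"
    by (simp add: exp_diff exp_minus field_simps)
  have "(\<integral>\<^sup>+k. ennreal (c ^ k) \<partial>poisson_measure r)
      = (\<integral>\<^sup>+k. ennreal (r ^ k / fact k * exp (- r) * c ^ k) \<partial>count_space UNIV)"
    unfolding poisson_measure_def using r c
    by (subst nn_integral_density) (auto intro!: nn_integral_cong simp: ennreal_mult[symmetric])
  also have "\<dots> = ennreal (exp (r * c - r))"
    using sums r c by (simp add: nn_integral_count_space_nat suminf_ennreal2 sums_iff)
  finally show ?thesis .
qed

lemma prob_space_poisson_measure: "prob_space (poisson_measure r)"
proof
  have "poisson_measure r = poisson_measure (max 0 r)"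
    unfolding poisson_measure_def by simp
  then show "emeasure (poisson_measure r) (space (poisson_measure r)) = 1"
    using nn_integral_poisson_measure_power[of "max 0 r" 1] by (simp add: nn_integral_const)
qed

lemma measurable_poisson_measure[measurable]:
  "poisson_measure \<in> borel \<rightarrow>\<^sub>M prob_algebra (count_space UNIV)"
proof (rule measurable_prob_algebraI[OF prob_space_poisson_measure measurable_subprob_algebra])
  show "subprob_space (poisson_measure r)" for r
    by (rule prob_space_imp_subprob_space[OF prob_space_poisson_measure])
  show "sets (poisson_measure r) = sets (count_space UNIV)" for r
    by (simp add: poisson_measure_def)
  fix A :: "nat set"
  have "emeasure (poisson_measure r) A = (\<Sum>k. ennreal (max 0 r ^ k / fact k * exp (- max 0 r)) * indicator A k)" for r
    unfolding poisson_measure_def by (subst emeasure_density) (auto simp: nn_integral_count_space_nat)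
  moreover have "(\<lambda>r::real. \<Sum>k. ennreal (max 0 r ^ k / fact k * exp (- max 0 r)) * indicator A k) \<in> borel_measurable borel"
    by measurable
  ultimately show "(\<lambda>r. emeasure (poisson_measure r) A) \<in> borel_measurable borel"
    by simp
qed

section \<open>Marks and sticks\<close>

lemma prob_space_mark_law: "0 < h \<Longrightarrow> prob_space (mark_law p h)"
  unfolding mark_law_def
  by (intro prob_space_pair prob_space_uniform_measure prob_space_measure_pmf prob_space_exponential_density) auto

lemma sets_mark_law[measurable_cong]: "sets (mark_law p h) = sets mark_space"
  unfolding mark_law_def mark_space_def by (intro sets_pair_measure_cong) auto

definition scale_mark :: "real \<Rightarrow> real \<times> bool \<times> real \<Rightarrow> real \<times> bool \<times> real" where
  "scale_mark h x = (h * fst x, snd x)"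

lemma measurable_scale_mark[measurable (raw)]:
  assumes "f \<in> M \<rightarrow>\<^sub>M borel" "g \<in> M \<rightarrow>\<^sub>M mark_space"
  shows "(\<lambda>x. scale_mark (f x) (g x)) \<in> M \<rightarrow>\<^sub>M mark_space"
  using assms unfolding scale_mark_def mark_space_def by measurable

lemma mark_law_scale:
  assumes h: "0 < h"
  shows "mark_law p h = distr (mark_law p 1) mark_space (scale_mark h)"
proof -
  let ?R = "measure_pmf (bernoulli_pmf p) \<Otimes>\<^sub>M density lborel (\<lambda>x. ennreal (exponential_density 1 x))"
  have R: "prob_space ?R"
    by (intro prob_space_pair prob_space_measure_pmf prob_space_exponential_density) simp
  have "mark_law p h = distr (uniform_measure lborel {-1..1}) borel (\<lambda>t. h * t) \<Otimes>\<^sub>M distr ?R ?R (\<lambda>x. x)"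
    unfolding mark_law_def uniform_measure_interval_scale[OF h] distr_id ..
  also have "\<dots> = distr (uniform_measure lborel {-1..1} \<Otimes>\<^sub>M ?R) (borel \<Otimes>\<^sub>M ?R) (\<lambda>(x, y). (h * x, y))"
    using R by (intro pair_measure_distr prob_space_imp_sigma_finite prob_space.prob_space_distr
        prob_space_uniform_measure) auto
  also have "\<dots> = distr (mark_law p 1) mark_space (scale_mark h)"
    unfolding mark_law_def mark_space_def scale_mark_def
    by (intro distr_cong sets_pair_measure_cong) (auto simp: case_prod_beta)
  finally show ?thesis .
qed

abbreviation borel_pos :: "real measure" where
  "borel_pos \<equiv> restrict_space borel {0<..}"

lemma measurable_borel_pos_borel[measurable (raw)]: "f \<in> M \<rightarrow>\<^sub>M borel_pos \<Longrightarrow> f \<in> borel_measurable M"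
  by (simp add: measurable_restrict_space2_iff)

lemma measurable_uniform_measure_interval[measurable]:
  "(\<lambda>h. uniform_measure lborel {-h..h}) \<in> borel_pos \<rightarrow>\<^sub>M prob_algebra (borel :: real measure)"
proof (rule measurable_cong[THEN iffD2])
  show "uniform_measure lborel {-h..h} = distr (uniform_measure lborel {-1..1}) borel (\<lambda>t. h * t)"
    if "h \<in> space borel_pos" for h
    using that by (intro uniform_measure_interval_scale) (simp add: space_restrict_space)
  have "uniform_measure lborel {-1..1::real} \<in> space (prob_algebra borel)"
    by (auto simp: space_prob_algebra intro!: prob_space_uniform_measure)
  then show "(\<lambda>h. distr (uniform_measure lborel {-1..1}) borel (\<lambda>t. h * t)) \<in> borel_pos \<rightarrow>\<^sub>M prob_algebra borel"
    by (intro measurable_distr_prob_space2[OF measurable_const]) measurable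
qed

lemma measurable_stream_space_mark_law[measurable]:
  "(\<lambda>h. stream_space (mark_law p h)) \<in> borel_pos \<rightarrow>\<^sub>M prob_algebra (stream_space mark_space)"
proof (rule measurable_cong[THEN iffD2])
  show "stream_space (mark_law p h) = distr (stream_space (mark_law p 1)) (stream_space mark_space) (smap (scale_mark h))"
    if "h \<in> space borel_pos" for h
  proof -
    have scale: "scale_mark h \<in> mark_law p 1 \<rightarrow>\<^sub>M mark_space"
      by measurable
    have "0 < h"
      using that by (simp add: space_restrict_space)
    show ?thesis
      unfolding mark_law_scale[OF \<open>0 < h\<close>]
      by (rule stream_space_distr[OF prob_space_mark_law scale]) simp
  qed
  have "stream_space (mark_law p 1) \<in> space (prob_algebra (stream_space mark_space))"
    by (auto simp: space_prob_algebra sets_mark_law intro!: prob_space.prob_space_stream_space prob_space_mark_law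
        sets_stream_space_cong)
  moreover have "(\<lambda>(h, xs). smap (scale_mark h) xs) \<in> borel_pos \<Otimes>\<^sub>M stream_space mark_space \<rightarrow>\<^sub>M stream_space mark_space"
    by (rule measurable_stream_space2) (simp add: case_prod_beta, measurable)
  ultimately show "(\<lambda>h. distr (stream_space (mark_law p 1)) (stream_space mark_space) (smap (scale_mark h)))
      \<in> borel_pos \<rightarrow>\<^sub>M prob_algebra (stream_space mark_space)"
    by (rule measurable_distr_prob_space2[OF measurable_const])
qed

type_synonym stick = "real \<times> real \<times> real \<times> nat \<times> (real \<times> bool \<times> real) stream"

lemma measurable_stick_tuple[measurable (raw)]:
  assumes "f1 \<in> borel_measurable M" "f2 \<in> borel_measurable M" "f3 \<in> borel_measurable M"
    "f4 \<in> M \<rightarrow>\<^sub>M count_space UNIV" "f5 \<in> M \<rightarrow>\<^sub>M stream_space mark_space"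
  shows "(\<lambda>x. (f1 x, f2 x, f3 x, f4 x, f5 x)) \<in> M \<rightarrow>\<^sub>M stick_space"
  using assms unfolding stick_space_def by measurable

lemma measurable_uniform_orientation[measurable]:
  "(\<lambda>x. uniform_measure lborel {0..<pi}) \<in> M \<rightarrow>\<^sub>M prob_algebra borel"
  by (rule measurable_const) (auto simp: space_prob_algebra intro!: prob_space_uniform_measure)

definition stick_law_given_count :: "real \<Rightarrow> real \<Rightarrow> real \<Rightarrow> real \<Rightarrow> nat \<Rightarrow> stick measure" where
  "stick_law_given_count p h w \<phi> n = stream_space (mark_law p h) \<bind> (\<lambda>xs. return stick_space (h, w, \<phi>, n, xs))"

definition stick_law_given_orientation :: "real \<Rightarrow> real \<Rightarrow> real \<Rightarrow> real \<Rightarrow> real \<Rightarrow> stick measure" where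
  "stick_law_given_orientation lam p h w \<phi> = poisson_measure (2 * h * lam) \<bind> stick_law_given_count p h w \<phi>"

definition stick_law_given_offset :: "real \<Rightarrow> real \<Rightarrow> real \<Rightarrow> real \<Rightarrow> stick measure" where
  "stick_law_given_offset lam p h w = uniform_measure lborel {0..<pi} \<bind> stick_law_given_orientation lam p h w"

definition stick_law_given_length :: "real \<Rightarrow> real \<Rightarrow> real \<Rightarrow> stick measure" where
  "stick_law_given_length lam p h = uniform_measure lborel {-h..h} \<bind> stick_law_given_offset lam p h"

definition biased_half_length_law :: "(real \<Rightarrow> real) \<Rightarrow> real measure" where
  "biased_half_length_law fH = restrict_space (density lborel (\<lambda>h. ennreal (tilde_fH fH h))) {0<..}"

lemma typical_stick_law_eq_bind:
  "typical_stick_law lam p fH = biased_half_length_law fH \<bind> stick_law_given_length lam p"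
  unfolding typical_stick_law_def biased_half_length_law_def stick_law_given_length_def
    stick_law_given_offset_def stick_law_given_orientation_def stick_law_given_count_def ..

lemma measurable_stick_law_given_count[measurable (raw)]:
  assumes [measurable]: "h \<in> M \<rightarrow>\<^sub>M borel_pos" "w \<in> borel_measurable M" "\<phi> \<in> borel_measurable M"
    "n \<in> M \<rightarrow>\<^sub>M count_space UNIV"
  shows "(\<lambda>x. stick_law_given_count p (h x) (w x) (\<phi> x) (n x)) \<in> M \<rightarrow>\<^sub>M prob_algebra stick_space"
  unfolding stick_law_given_count_def by measurable

lemma measurable_stick_law_given_orientation[measurable (raw)]:
  assumes [measurable]: "h \<in> M \<rightarrow>\<^sub>M borel_pos" "w \<in> borel_measurable M" "\<phi> \<in> borel_measurable M"
  shows "(\<lambda>x. stick_law_given_orientation lam p (h x) (w x) (\<phi> x)) \<in> M \<rightarrow>\<^sub>M prob_algebra stick_space"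
  unfolding stick_law_given_orientation_def by measurable

lemma measurable_stick_law_given_offset[measurable (raw)]:
  assumes [measurable]: "h \<in> M \<rightarrow>\<^sub>M borel_pos" "w \<in> borel_measurable M"
  shows "(\<lambda>x. stick_law_given_offset lam p (h x) (w x)) \<in> M \<rightarrow>\<^sub>M prob_algebra stick_space"
  unfolding stick_law_given_offset_def by measurable

lemma measurable_stick_law_given_length[measurable]:
  "stick_law_given_length lam p \<in> borel_pos \<rightarrow>\<^sub>M prob_algebra stick_space"
  unfolding stick_law_given_length_def by measurable

definition vehicle_interference :: "real \<Rightarrow> real \<Rightarrow> real \<times> bool \<times> real \<Rightarrow> real" where
  "vehicle_interference \<alpha> w x = snd (snd x) * \<bar>fst x - w\<bar> powr (- \<alpha>) * (if fst (snd x) then 1 else 0)"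

lemma measurable_vehicle_interference[measurable (raw)]:
  assumes "f \<in> borel_measurable M" "g \<in> M \<rightarrow>\<^sub>M mark_space"
  shows "(\<lambda>x. vehicle_interference \<alpha> (f x) (g x)) \<in> borel_measurable M"
  using assms unfolding vehicle_interference_def mark_space_def by measurable

lemma norm_vehicle_pos: "norm (vehicle_pos w \<phi> t) = \<bar>t - w\<bar>"
proof -
  have "((t - w) * cos \<phi>)\<^sup>2 + ((t - w) * sin \<phi>)\<^sup>2 = (t - w)\<^sup>2"
    by (simp add: power_mult_distrib flip: distrib_left)
  then show ?thesis
    by (simp add: vehicle_pos_def udir_def norm_Pair)
qed

lemma stick_interference_eq:
  "stick_interference \<alpha> (h, w, \<phi>, n, xs) = (\<Sum>i<n. vehicle_interference \<alpha> w (xs !! i))"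
  unfolding stick_interference_def vehicle_interference_def
  by (auto intro!: sum.cong simp: norm_vehicle_pos split: prod.split)

lemma measurable_stick_interference[measurable]:
  "stick_interference \<alpha> \<in> borel_measurable stick_space"
proof -
  have "(\<lambda>\<omega>. (\<lambda>n. \<Sum>i<n. vehicle_interference \<alpha> (fst (snd \<omega>)) (snd (snd (snd (snd \<omega>))) !! i))
      (fst (snd (snd (snd \<omega>))))) \<in> borel_measurable stick_space"
    unfolding stick_space_def
    by (rule measurable_compose_countable[where g="\<lambda>\<omega>. fst (snd (snd (snd \<omega>)))"]) measurable
  moreover have "stick_interference \<alpha> = (\<lambda>\<omega>. (\<lambda>n. \<Sum>i<n. vehicle_interference \<alpha> (fst (snd \<omega>))
      (snd (snd (snd (snd \<omega>))) !! i)) (fst (snd (snd (snd \<omega>)))))"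
  proof
    show "stick_interference \<alpha> \<omega> = (\<lambda>n. \<Sum>i<n. vehicle_interference \<alpha> (fst (snd \<omega>))
      (snd (snd (snd (snd \<omega>))) !! i)) (fst (snd (snd (snd \<omega>))))" for \<omega>
      by (cases \<omega>) (simp add: stick_interference_eq)
  qed
  ultimately show ?thesis
    by simp
qed

section \<open>Laplace transform of the interference of one stick\<close>

definition rayleigh_deficit :: "real \<Rightarrow> real \<Rightarrow> real \<Rightarrow> real \<Rightarrow> real" where
  "rayleigh_deficit \<alpha> s w t = s * \<bar>t - w\<bar> powr (- \<alpha>) / (1 + s * \<bar>t - w\<bar> powr (- \<alpha>))"

lemma rayleigh_deficit_bounds:
  assumes "0 \<le> s"
  shows "0 \<le> rayleigh_deficit \<alpha> s w t \<and> rayleigh_deficit \<alpha> s w t \<le> 1"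
proof -
  have "0 \<le> s * \<bar>t - w\<bar> powr (- \<alpha>)"
    using assms by simp
  then show ?thesis
    unfolding rayleigh_deficit_def by (auto simp: divide_le_eq)
qed

lemma measurable_rayleigh_deficit[measurable (raw)]:
  assumes "f \<in> borel_measurable M" "g \<in> borel_measurable M"
  shows "(\<lambda>x. rayleigh_deficit \<alpha> s (f x) (g x)) \<in> borel_measurable M"
  using assms unfolding rayleigh_deficit_def by measurable

lemma set_integral_rayleigh_deficit_bounds:
  assumes "0 < h" and "0 \<le> s"
  shows "0 \<le> (LINT t:{-h..h}|lborel. rayleigh_deficit \<alpha> s w t)
    \<and> (LINT t:{-h..h}|lborel. rayleigh_deficit \<alpha> s w t) \<le> 2 * h"
  using set_integral_interval_bounds[of "rayleigh_deficit \<alpha> s w" "-h" h 1] rayleigh_deficit_bounds assms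
  by auto

lemma nn_integral_activity_fading:
  assumes p: "0 \<le> p" "p \<le> 1" and s: "0 \<le> s"
  shows "(\<integral>\<^sup>+y. ennreal (exp (- s * vehicle_interference \<alpha> w (t, y)))
      \<partial>(measure_pmf (bernoulli_pmf p) \<Otimes>\<^sub>M density lborel (\<lambda>x. ennreal (exponential_density 1 x))))
    = ennreal (1 - p * rayleigh_deficit \<alpha> s w t)"
proof -
  let ?E = "density lborel (\<lambda>x. ennreal (exponential_density 1 x))"
  interpret E: sigma_finite_measure ?E
    by (intro prob_space_imp_sigma_finite prob_space_exponential_density) simp
  define r where "r = s * \<bar>t - w\<bar> powr (- \<alpha>)"
  have r: "0 \<le> r"
    unfolding r_def using s by simp
  have "(\<lambda>x. ennreal (exp (- s * vehicle_interference \<alpha> w x))) \<in> borel_measurable mark_space"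
    by measurable
  from measurable_Pair2[OF this[unfolded mark_space_def], of t]
  have "(\<lambda>y. ennreal (exp (- s * vehicle_interference \<alpha> w (t, y))))
      \<in> borel_measurable (count_space UNIV \<Otimes>\<^sub>M borel)"
    by simp
  then have "(\<integral>\<^sup>+y. ennreal (exp (- s * vehicle_interference \<alpha> w (t, y))) \<partial>(measure_pmf (bernoulli_pmf p) \<Otimes>\<^sub>M ?E))
      = (\<integral>\<^sup>+b. \<integral>\<^sup>+g. ennreal (exp (- (if b then r else 0) * g)) \<partial>?E \<partial>measure_pmf (bernoulli_pmf p))"
    by (subst E.nn_integral_fst[symmetric])
       (auto simp: measurable_cong_sets[OF sets_pair_measure_cong refl] vehicle_interference_def r_def
         intro!: nn_integral_cong arg_cong[where f = ennreal])
  also have "\<dots> = (\<integral>\<^sup>+b. ennreal (1 / (1 + (if b then r else 0))) \<partial>measure_pmf (bernoulli_pmf p))"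
    using r by (intro nn_integral_cong nn_integral_exp_exponential_density) auto
  also have "\<dots> = ennreal (p * (1 / (1 + r)) + (1 - p))"
    using p r by (simp add: nn_integral_bernoulli_pmf ennreal_mult[symmetric] ennreal_plus[symmetric]
        del: ennreal_plus)
  also have "p * (1 / (1 + r)) + (1 - p) = 1 - p * rayleigh_deficit \<alpha> s w t"
    using r unfolding rayleigh_deficit_def r_def[symmetric] by (simp add: field_simps)
  finally show ?thesis .
qed

definition vehicle_laplace :: "real \<Rightarrow> real \<Rightarrow> real \<Rightarrow> real \<Rightarrow> real \<Rightarrow> real" where
  "vehicle_laplace \<alpha> s p h w = 1 - p * (LINT t:{-h..h}|lborel. rayleigh_deficit \<alpha> s w t) / (2 * h)"

lemma vehicle_laplace_nonneg:
  assumes "0 < h" and "0 \<le> p" "p \<le> 1" and "0 \<le> s"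
  shows "0 \<le> vehicle_laplace \<alpha> s p h w"
proof -
  have "p * (LINT t:{-h..h}|lborel. rayleigh_deficit \<alpha> s w t) \<le> 1 * (2 * h)"
    using set_integral_rayleigh_deficit_bounds[of h s \<alpha> w] assms by (intro mult_mono) auto
  then show ?thesis
    using assms by (simp add: vehicle_laplace_def)
qed

lemma nn_integral_mark_law:
  assumes h: "0 < h" and p: "0 \<le> p" "p \<le> 1" and s: "0 \<le> s"
  shows "(\<integral>\<^sup>+x. ennreal (exp (- s * vehicle_interference \<alpha> w x)) \<partial>mark_law p h)
    = ennreal (vehicle_laplace \<alpha> s p h w)"
proof -
  let ?R = "measure_pmf (bernoulli_pmf p) \<Otimes>\<^sub>M density lborel (\<lambda>x. ennreal (exponential_density 1 x))"
  interpret R: sigma_finite_measure ?R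
    by (intro prob_space_imp_sigma_finite prob_space_pair prob_space_measure_pmf
        prob_space_exponential_density) simp
  have bounds: "0 \<le> 1 - p * rayleigh_deficit \<alpha> s w t \<and> 1 - p * rayleigh_deficit \<alpha> s w t \<le> 1" for t
    using rayleigh_deficit_bounds[OF s, of \<alpha> w t] p by (auto simp: mult_le_one)
  have integrable: "set_integrable lborel {-h..h} (\<lambda>t. c * rayleigh_deficit \<alpha> s w t)" for c
    using rayleigh_deficit_bounds[OF s, of \<alpha> w]
    by (intro set_integrable_bounded_interval[where B="\<bar>c\<bar>"]) (auto simp: abs_mult mult_left_le)
  have "(\<lambda>x. ennreal (exp (- s * vehicle_interference \<alpha> w x))) \<in> borel_measurable mark_space"
    by measurable
  then have "(\<integral>\<^sup>+x. ennreal (exp (- s * vehicle_interference \<alpha> w x)) \<partial>mark_law p h)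
      = (\<integral>\<^sup>+t. \<integral>\<^sup>+y. ennreal (exp (- s * vehicle_interference \<alpha> w (t, y))) \<partial>?R \<partial>uniform_measure lborel {-h..h})"
    unfolding mark_law_def
    by (subst R.nn_integral_fst[symmetric])
       (simp_all add: measurable_cong_sets[OF sets_mark_law[unfolded mark_law_def] refl])
  also have "\<dots> = (\<integral>\<^sup>+t. ennreal (1 - p * rayleigh_deficit \<alpha> s w t) \<partial>uniform_measure lborel {-h..h})"
    using p s by (intro nn_integral_cong nn_integral_activity_fading) auto
  also have "\<dots> = ennreal ((LINT t:{-h..h}|lborel. 1 - p * rayleigh_deficit \<alpha> s w t) / (h - - h))"
    using h bounds by (intro nn_integral_uniform_measure_interval[where B=1]) auto
  also have "(LINT t:{-h..h}|lborel. 1 - p * rayleigh_deficit \<alpha> s w t)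
      = 2 * h - p * (LINT t:{-h..h}|lborel. rayleigh_deficit \<alpha> s w t)"
  proof -
    have "set_integrable lborel {-h..h} (\<lambda>t. 1::real)"
      by (rule set_integrable_bounded_interval[where B=1]) auto
    then show ?thesis
      using h by (simp add: set_integral_diff(2)[OF _ integrable[of p]] set_integral_const)
  qed
  finally show ?thesis
    using h by (simp add: vehicle_laplace_def diff_divide_distrib)
qed

lemma measurable_exp_stick_interference[measurable]:
  "(\<lambda>\<omega>. ennreal (exp (- s * stick_interference \<alpha> \<omega>))) \<in> borel_measurable stick_space"
  by measurable

lemma nn_integral_stick_law_given_count:
  assumes h: "0 < h" and p: "0 \<le> p" "p \<le> 1" and s: "0 \<le> s"
  shows "(\<integral>\<^sup>+\<omega>. ennreal (exp (- s * stick_interference \<alpha> \<omega>)) \<partial>stick_law_given_count p h w \<phi> n)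
    = ennreal (vehicle_laplace \<alpha> s p h w ^ n)"
proof -
  have "(\<lambda>xs. return stick_space (h, w, \<phi>, n, xs)) \<in> stream_space (mark_law p h) \<rightarrow>\<^sub>M subprob_algebra stick_space"
    by measurable
  then have "(\<integral>\<^sup>+\<omega>. ennreal (exp (- s * stick_interference \<alpha> \<omega>)) \<partial>stick_law_given_count p h w \<phi> n)
      = (\<integral>\<^sup>+xs. \<integral>\<^sup>+\<omega>. ennreal (exp (- s * stick_interference \<alpha> \<omega>)) \<partial>return stick_space (h, w, \<phi>, n, xs)
          \<partial>stream_space (mark_law p h))"
    unfolding stick_law_given_count_def by (rule nn_integral_bind[OF measurable_exp_stick_interference])
  also have "\<dots> = (\<integral>\<^sup>+xs. ennreal (exp (- s * stick_interference \<alpha> (h, w, \<phi>, n, xs))) \<partial>stream_space (mark_law p h))"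
    by (intro nn_integral_cong nn_integral_return measurable_exp_stick_interference)
       (simp add: stick_space_def space_pair_measure space_stream_space mark_space_def)
  also have "\<dots> = (\<integral>\<^sup>+xs. (\<Prod>i<n. ennreal (exp (- s * vehicle_interference \<alpha> w (xs !! i)))) \<partial>stream_space (mark_law p h))"
    by (simp add: stick_interference_eq sum_distrib_left exp_sum prod_ennreal)
  also have "\<dots> = ennreal (vehicle_laplace \<alpha> s p h w) ^ n"
  proof -
    have "(\<lambda>x. ennreal (exp (- s * vehicle_interference \<alpha> w x))) \<in> borel_measurable (mark_law p h)"
      by measurable
    from nn_integral_stream_space_prod[OF prob_space_mark_law[OF h] this]
    show ?thesis
      unfolding nn_integral_mark_law[OF h p s] .
  qed
  finally show ?thesis
    using vehicle_laplace_nonneg[OF h p s] by (simp add: ennreal_power)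
qed

definition stick_laplace_given_offset :: "real \<Rightarrow> real \<Rightarrow> real \<Rightarrow> real \<Rightarrow> real \<Rightarrow> real \<Rightarrow> real" where
  "stick_laplace_given_offset \<alpha> s lam p h w =
     exp (- lam * p * (LINT t:{-h..h}|lborel. rayleigh_deficit \<alpha> s w t))"

lemma stick_laplace_given_offset_bounds:
  assumes "0 < h" and "0 \<le> p" and "0 \<le> s" and "0 \<le> lam"
  shows "0 \<le> stick_laplace_given_offset \<alpha> s lam p h w \<and> stick_laplace_given_offset \<alpha> s lam p h w \<le> 1"
  using set_integral_rayleigh_deficit_bounds[of h s \<alpha> w] assms
  by (simp add: stick_laplace_given_offset_def)

lemma measurable_stick_laplace_given_offset:
  "(\<lambda>x. stick_laplace_given_offset \<alpha> s lam p (fst x) (snd x)) \<in> borel_measurable (borel \<Otimes>\<^sub>M borel)"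
proof -
  have "(\<lambda>x. LINT t:{- fst x..fst x}|lborel. rayleigh_deficit \<alpha> s (snd x) t) \<in> borel_measurable (borel \<Otimes>\<^sub>M borel)"
    by (rule borel_measurable_set_integral_interval[where f = "\<lambda>x t. rayleigh_deficit \<alpha> s (snd x) t"])
      measurable
  then show ?thesis
    unfolding stick_laplace_given_offset_def by measurable
qed

lemma nn_integral_stick_law_given_orientation:
  assumes h: "0 < h" and p: "0 \<le> p" "p \<le> 1" and s: "0 \<le> s" and lam: "0 \<le> lam"
  shows "(\<integral>\<^sup>+\<omega>. ennreal (exp (- s * stick_interference \<alpha> \<omega>)) \<partial>stick_law_given_orientation lam p h w \<phi>)
    = ennreal (stick_laplace_given_offset \<alpha> s lam p h w)"
proof -
  have "h \<in> space borel_pos"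
    using h by (simp add: space_restrict_space)
  then have kernel: "(\<lambda>n. stick_law_given_count p ((\<lambda>_. h) n) ((\<lambda>_. w) n) ((\<lambda>_. \<phi>) n) ((\<lambda>n. n) n))
      \<in> count_space UNIV \<rightarrow>\<^sub>M prob_algebra stick_space"
    by (intro measurable_stick_law_given_count measurable_const) auto
  have "(\<integral>\<^sup>+\<omega>. ennreal (exp (- s * stick_interference \<alpha> \<omega>)) \<partial>stick_law_given_orientation lam p h w \<phi>)
      = (\<integral>\<^sup>+n. \<integral>\<^sup>+\<omega>. ennreal (exp (- s * stick_interference \<alpha> \<omega>)) \<partial>stick_law_given_count p h w \<phi> n
          \<partial>poisson_measure (2 * h * lam))"
    unfolding stick_law_given_orientation_def
    by (rule nn_integral_bind_prob_kernel[OF kernel _ measurable_exp_stick_interference])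
       (simp add: poisson_measure_def)
  also have "\<dots> = (\<integral>\<^sup>+n. ennreal (vehicle_laplace \<alpha> s p h w ^ n) \<partial>poisson_measure (2 * h * lam))"
    by (intro nn_integral_cong nn_integral_stick_law_given_count h p s)
  also have "\<dots> = ennreal (exp (2 * h * lam * vehicle_laplace \<alpha> s p h w - 2 * h * lam))"
    using h lam vehicle_laplace_nonneg[OF h p s] by (intro nn_integral_poisson_measure_power) auto
  also have "2 * h * lam * vehicle_laplace \<alpha> s p h w - 2 * h * lam
      = - lam * p * (LINT t:{-h..h}|lborel. rayleigh_deficit \<alpha> s w t)"
    using h by (simp add: vehicle_laplace_def field_simps)
  finally show ?thesis
    unfolding stick_laplace_given_offset_def .
qed

lemma nn_integral_stick_law_given_offset:
  assumes h: "0 < h" and p: "0 \<le> p" "p \<le> 1" and s: "0 \<le> s" and lam: "0 \<le> lam"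
  shows "(\<integral>\<^sup>+\<omega>. ennreal (exp (- s * stick_interference \<alpha> \<omega>)) \<partial>stick_law_given_offset lam p h w)
    = ennreal (stick_laplace_given_offset \<alpha> s lam p h w)"
proof -
  interpret prob_space "uniform_measure lborel {0..<pi}"
    by (rule prob_space_uniform_measure) auto
  have "h \<in> space borel_pos"
    using h by (simp add: space_restrict_space)
  then have kernel: "(\<lambda>\<phi>. stick_law_given_orientation lam p ((\<lambda>_. h) \<phi>) ((\<lambda>_. w) \<phi>) ((\<lambda>\<phi>. \<phi>) \<phi>))
      \<in> borel \<rightarrow>\<^sub>M prob_algebra stick_space"
    by (intro measurable_stick_law_given_orientation measurable_const) auto
  have "(\<integral>\<^sup>+\<omega>. ennreal (exp (- s * stick_interference \<alpha> \<omega>)) \<partial>stick_law_given_offset lam p h w)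
      = (\<integral>\<^sup>+\<phi>. \<integral>\<^sup>+\<omega>. ennreal (exp (- s * stick_interference \<alpha> \<omega>)) \<partial>stick_law_given_orientation lam p h w \<phi>
          \<partial>uniform_measure lborel {0..<pi})"
    unfolding stick_law_given_offset_def
    by (rule nn_integral_bind_prob_kernel[OF kernel _ measurable_exp_stick_interference]) simp
  also have "\<dots> = ennreal (stick_laplace_given_offset \<alpha> s lam p h w)"
    using nn_integral_stick_law_given_orientation[OF h p s lam] by (simp add: emeasure_space_1)
  finally show ?thesis .
qed

definition stick_laplace_given_length :: "real \<Rightarrow> real \<Rightarrow> real \<Rightarrow> real \<Rightarrow> real \<Rightarrow> real" where
  "stick_laplace_given_length \<alpha> s lam p h =
     (LINT w:{-h..h}|lborel. stick_laplace_given_offset \<alpha> s lam p h w) / (2 * h)"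

lemma stick_laplace_given_length_bounds:
  assumes "0 < h" and "0 \<le> p" and "0 \<le> s" and "0 \<le> lam"
  shows "0 \<le> stick_laplace_given_length \<alpha> s lam p h \<and> stick_laplace_given_length \<alpha> s lam p h \<le> 1"
proof -
  have "(\<lambda>w. stick_laplace_given_offset \<alpha> s lam p h w) \<in> borel_measurable borel"
    using measurable_Pair2[OF measurable_stick_laplace_given_offset, of h] by simp
  then have "0 \<le> (LINT w:{-h..h}|lborel. stick_laplace_given_offset \<alpha> s lam p h w)
      \<and> (LINT w:{-h..h}|lborel. stick_laplace_given_offset \<alpha> s lam p h w) \<le> 1 * (h - - h)"
    using assms stick_laplace_given_offset_bounds by (intro set_integral_interval_bounds) auto
  then show ?thesis
    using assms by (auto simp: stick_laplace_given_length_def divide_le_eq)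
qed

lemma measurable_stick_laplace_given_length[measurable]:
  "stick_laplace_given_length \<alpha> s lam p \<in> borel_measurable borel"
proof -
  have "(\<lambda>h. LINT w:{-h..h}|lborel. stick_laplace_given_offset \<alpha> s lam p h w) \<in> borel_measurable borel"
    using measurable_stick_laplace_given_offset
    by (intro borel_measurable_set_integral_interval[where f = "stick_laplace_given_offset \<alpha> s lam p"]) auto
  then show ?thesis
    unfolding stick_laplace_given_length_def[abs_def] by measurable
qed

lemma nn_integral_stick_law_given_length:
  assumes h: "0 < h" and p: "0 \<le> p" "p \<le> 1" and s: "0 \<le> s" and lam: "0 \<le> lam"
  shows "(\<integral>\<^sup>+\<omega>. ennreal (exp (- s * stick_interference \<alpha> \<omega>)) \<partial>stick_law_given_length lam p h)
    = ennreal (stick_laplace_given_length \<alpha> s lam p h)"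
proof -
  have "h \<in> space borel_pos"
    using h by (simp add: space_restrict_space)
  then have kernel: "(\<lambda>w. stick_law_given_offset lam p ((\<lambda>_. h) w) ((\<lambda>w. w) w)) \<in> borel \<rightarrow>\<^sub>M prob_algebra stick_space"
    by (intro measurable_stick_law_given_offset measurable_const) auto
  have "(\<integral>\<^sup>+\<omega>. ennreal (exp (- s * stick_interference \<alpha> \<omega>)) \<partial>stick_law_given_length lam p h)
      = (\<integral>\<^sup>+w. \<integral>\<^sup>+\<omega>. ennreal (exp (- s * stick_interference \<alpha> \<omega>)) \<partial>stick_law_given_offset lam p h w
          \<partial>uniform_measure lborel {-h..h})"
    unfolding stick_law_given_length_def
    by (rule nn_integral_bind_prob_kernel[OF kernel _ measurable_exp_stick_interference]) simp
  also have "\<dots> = (\<integral>\<^sup>+w. ennreal (stick_laplace_given_offset \<alpha> s lam p h w) \<partial>uniform_measure lborel {-h..h})"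
    by (intro nn_integral_cong nn_integral_stick_law_given_offset h p s lam)
  also have "\<dots> = ennreal ((LINT w:{-h..h}|lborel. stick_laplace_given_offset \<alpha> s lam p h w) / (h - - h))"
    using measurable_Pair2[OF measurable_stick_laplace_given_offset, of h] h p s lam
      stick_laplace_given_offset_bounds
    by (intro nn_integral_uniform_measure_interval[where B=1]) auto
  finally show ?thesis
    by (simp add: stick_laplace_given_length_def)
qed

section \<open>The typical vehicle\<close>

lemma tilde_fH_nonneg:
  assumes "\<And>h. 0 \<le> fH h" and "\<And>h. h \<le> 0 \<Longrightarrow> fH h = 0" and "0 < mean_half_length fH"
  shows "0 \<le> tilde_fH fH h"
  using assms by (cases "h \<le> 0") (simp_all add: tilde_fH_def)

lemma sets_biased_half_length_law: "sets (biased_half_length_law fH) = sets borel_pos"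
  unfolding biased_half_length_law_def by (rule sets_restrict_space_cong) simp

lemma nn_integral_biased_half_length_law:
  assumes [measurable]: "fH \<in> borel_measurable borel"
    and fH_nonneg: "\<And>h. 0 \<le> fH h" and fH_nonpos: "\<And>h. h \<le> 0 \<Longrightarrow> fH h = 0"
    and mean_integrable: "integrable lborel (\<lambda>h. h * fH h)" and mean: "0 < mean_half_length fH"
    and [measurable]: "g \<in> borel_measurable borel" and g_bounds: "\<And>h. 0 < h \<Longrightarrow> 0 \<le> g h \<and> g h \<le> 1"
  shows "(\<integral>\<^sup>+h. ennreal (g h) \<partial>biased_half_length_law fH) = ennreal (LINT h:{0<..}|lborel. g h * tilde_fH fH h)"
proof -
  have tilde_nonneg: "0 \<le> tilde_fH fH h" for h
    using fH_nonneg fH_nonpos mean by (rule tilde_fH_nonneg)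
  have [measurable]: "tilde_fH fH \<in> borel_measurable borel"
    unfolding tilde_fH_def[abs_def] by measurable
  have "integrable lborel (tilde_fH fH)"
    unfolding tilde_fH_def[abs_def] using mean_integrable by simp
  then have "integrable lborel (\<lambda>h. indicator {0<..} h *\<^sub>R (g h * tilde_fH fH h))"
    by (rule Bochner_Integration.integrable_bound)
       (auto simp: tilde_nonneg g_bounds abs_mult mult_left_le_one_le split: split_indicator)
  then have "(\<integral>\<^sup>+h. ennreal (indicator {0<..} h *\<^sub>R (g h * tilde_fH fH h)) \<partial>lborel)
      = ennreal (LINT h:{0<..}|lborel. g h * tilde_fH fH h)"
    unfolding set_lebesgue_integral_def
    by (rule nn_integral_eq_integral) (auto simp: tilde_nonneg g_bounds split: split_indicator)
  moreover have "(\<integral>\<^sup>+h. ennreal (g h) \<partial>biased_half_length_law fH)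
      = (\<integral>\<^sup>+h. ennreal (tilde_fH fH h) * (ennreal (g h) * indicator {0<..} h) \<partial>lborel)"
    unfolding biased_half_length_law_def
    by (simp add: nn_integral_restrict_space nn_integral_density)
  moreover have "ennreal (tilde_fH fH h) * (ennreal (g h) * indicator {0<..} h)
      = ennreal (indicator {0<..} h *\<^sub>R (g h * tilde_fH fH h))" for h
    using tilde_nonneg[of h] g_bounds[of h]
    by (cases "0 < h") (simp_all add: ennreal_mult[symmetric] mult.commute)
  ultimately show ?thesis
    by simp
qed

lemma prob_space_biased_half_length_law:
  assumes "fH \<in> borel_measurable borel"
    and "\<And>h. 0 \<le> fH h" and fH_nonpos: "\<And>h. h \<le> 0 \<Longrightarrow> fH h = 0"
    and "integrable lborel (\<lambda>h. h * fH h)" and mean: "0 < mean_half_length fH"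
  shows "prob_space (biased_half_length_law fH)"
proof
  have "(\<integral>\<^sup>+h. ennreal 1 \<partial>biased_half_length_law fH) = ennreal (LINT h:{0<..}|lborel. tilde_fH fH h)"
    using nn_integral_biased_half_length_law[OF assms, of "\<lambda>_. 1"] by simp
  also have "(LINT h:{0<..}|lborel. tilde_fH fH h) = (LINT h|lborel. tilde_fH fH h)"
    unfolding set_lebesgue_integral_def
    using fH_nonpos by (intro Bochner_Integration.integral_cong) (auto simp: tilde_fH_def split: split_indicator)
  also have "\<dots> = 1"
    using mean unfolding tilde_fH_def[abs_def] by (simp add: mean_half_length_def)
  finally show "emeasure (biased_half_length_law fH) (space (biased_half_length_law fH)) = 1"
    by (simp add: nn_integral_const)
qed

lemma typical_stick_law_in_prob_algebra:
  assumes "fH \<in> borel_measurable borel"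
    and "\<And>h. 0 \<le> fH h" and "\<And>h. h \<le> 0 \<Longrightarrow> fH h = 0"
    and "integrable lborel (\<lambda>h. h * fH h)" and "0 < mean_half_length fH"
  shows "typical_stick_law lam p fH \<in> space (prob_algebra stick_space)"
proof -
  have law: "biased_half_length_law fH \<in> space (prob_algebra borel_pos)"
    using prob_space_biased_half_length_law[OF assms]
    by (simp add: space_prob_algebra sets_biased_half_length_law)
  show ?thesis
    unfolding typical_stick_law_eq_bind space_prob_algebra
    using prob_space_bind'[OF law measurable_stick_law_given_length]
      sets_bind'[OF law measurable_stick_law_given_length]
    by simp
qed

lemma nn_integral_typical_stick_law:
  assumes fH: "fH \<in> borel_measurable borel"
    "\<And>h. 0 \<le> fH h" "\<And>h. h \<le> 0 \<Longrightarrow> fH h = 0"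
    "integrable lborel (\<lambda>h. h * fH h)" "0 < mean_half_length fH"
    and p: "0 \<le> p" "p \<le> 1" and s: "0 \<le> s" and lam: "0 \<le> lam"
  shows "(\<integral>\<^sup>+\<omega>. ennreal (exp (- s * stick_interference \<alpha> \<omega>)) \<partial>typical_stick_law lam p fH)
    = ennreal (LINT h:{0<..}|lborel. stick_laplace_given_length \<alpha> s lam p h * tilde_fH fH h)"
proof -
  have "(\<integral>\<^sup>+\<omega>. ennreal (exp (- s * stick_interference \<alpha> \<omega>)) \<partial>typical_stick_law lam p fH)
      = (\<integral>\<^sup>+h. \<integral>\<^sup>+\<omega>. ennreal (exp (- s * stick_interference \<alpha> \<omega>)) \<partial>stick_law_given_length lam p h
          \<partial>biased_half_length_law fH)"
    unfolding typical_stick_law_eq_bind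
    by (rule nn_integral_bind_prob_kernel[OF measurable_stick_law_given_length sets_biased_half_length_law])
      measurable
  also have "\<dots> = (\<integral>\<^sup>+h. ennreal (stick_laplace_given_length \<alpha> s lam p h) \<partial>biased_half_length_law fH)"
    by (intro nn_integral_cong nn_integral_stick_law_given_length p s lam)
       (simp add: biased_half_length_law_def space_restrict_space)
  also have "\<dots> = ennreal (LINT h:{0<..}|lborel. stick_laplace_given_length \<alpha> s lam p h * tilde_fH fH h)"
    using p s lam stick_laplace_given_length_bounds
    by (intro nn_integral_biased_half_length_law[OF fH]) auto
  finally show ?thesis .
qed

lemma set_integral_rayleigh_deficit_rescale:
  fixes \<alpha> s \<delta> h w :: real
  assumes \<alpha>: "0 < \<alpha>" and \<delta>: "\<delta> = 2 / \<alpha>" and s: "0 < s"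
  shows "(LINT t:{-h..h}|lborel. rayleigh_deficit \<alpha> s w t) =
    s powr (\<delta> / 2) * (LINT v:{(- w - h) * s powr (- \<delta> / 2)..(- w + h) * s powr (- \<delta> / 2)}|lborel.
      1 / (1 + \<bar>v\<bar> powr (2 / \<delta>)))"
proof -
  define c where "c = s powr (- \<delta> / 2)"
  have c: "0 < c"
    unfolding c_def using s by simp
  have c_powr: "c powr \<alpha> = 1 / s"
    unfolding c_def powr_powr using s \<alpha> \<delta> by (simp add: powr_minus_divide)
  have "2 / \<delta> = \<alpha>"
    using \<delta> \<alpha> by simp
  have integrand: "indicator {(- w - h) * c..(- w + h) * c} (- c * w + c * t) *\<^sub>R (1 / (1 + \<bar>- c * w + c * t\<bar> powr \<alpha>))
      = (indicator {-h..h} t *\<^sub>R rayleigh_deficit \<alpha> s w t :: real)" if "t \<noteq> w" for t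
  proof -
    have "- c * w + c * t = c * (t - w)"
      by (simp add: algebra_simps)
    moreover have "(- w - h) * c = c * (- h - w)" "(- w + h) * c = c * (h - w)"
      by (simp_all add: algebra_simps)
    moreover have "1 / (1 + c powr \<alpha> * \<bar>t - w\<bar> powr \<alpha>) = rayleigh_deficit \<alpha> s w t"
      using that s unfolding c_powr rayleigh_deficit_def by (simp add: powr_minus field_simps)
    ultimately show ?thesis
      using c by (simp add: abs_mult powr_mult mult_le_cancel_left_pos indicator_def)
  qed
  have "(LINT v:{(- w - h) * c..(- w + h) * c}|lborel. 1 / (1 + \<bar>v\<bar> powr \<alpha>))
      = c * (\<integral>t. indicator {(- w - h) * c..(- w + h) * c} (- c * w + c * t)
          *\<^sub>R (1 / (1 + \<bar>- c * w + c * t\<bar> powr \<alpha>)) \<partial>lborel)"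
    unfolding set_lebesgue_integral_def using c by (subst lborel_integral_real_affine[where c=c and t="- c * w"]) auto
  also have "\<dots> = c * (LINT t:{-h..h}|lborel. rayleigh_deficit \<alpha> s w t)"
  proof -
    have "AE t in lborel. indicator {(- w - h) * c..(- w + h) * c} (- c * w + c * t)
        *\<^sub>R (1 / (1 + \<bar>- c * w + c * t\<bar> powr \<alpha>)) = indicator {-h..h} t *\<^sub>R rayleigh_deficit \<alpha> s w t"
      using AE_lborel_singleton[of w] by (rule eventually_mono) (rule integrand)
    then show ?thesis
      unfolding set_lebesgue_integral_def by (intro arg_cong[where f = "(*) c"] integral_cong_AE) simp_all
  qed
  finally have "s powr (\<delta> / 2) * (LINT v:{(- w - h) * c..(- w + h) * c}|lborel. 1 / (1 + \<bar>v\<bar> powr \<alpha>))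
      = (s powr (\<delta> / 2) * c) * (LINT t:{-h..h}|lborel. rayleigh_deficit \<alpha> s w t)"
    by simp
  also have "s powr (\<delta> / 2) * c = 1"
    unfolding c_def using s by (simp add: powr_add[symmetric])
  finally show ?thesis
    unfolding c_def \<open>2 / \<delta> = \<alpha>\<close> by simp
qed

lemma stick_laplace_given_length_eq:
  assumes "0 < \<alpha>" and "\<delta> = 2 / \<alpha>" and "0 < s"
  shows "stick_laplace_given_length \<alpha> s lam p h =
    1 / (2 * h) * (LINT w:{-h..h}|lborel.
      exp (- lam * p * s powr (\<delta> / 2) *
        (LINT v:{(- w - h) * s powr (- \<delta> / 2)..(- w + h) * s powr (- \<delta> / 2)}|lborel.
          1 / (1 + \<bar>v\<bar> powr (2 / \<delta>)))))"
  unfolding stick_laplace_given_length_def stick_laplace_given_offset_def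
    set_integral_rayleigh_deficit_rescale[OF assms]
  by (simp add: mult.assoc)

lemma laplace_interference_eq_power:
  assumes fH: "fH \<in> borel_measurable borel"
    "\<And>h. 0 \<le> fH h" "\<And>h. h \<le> 0 \<Longrightarrow> fH h = 0"
    "integrable lborel (\<lambda>h. h * fH h)" "0 < mean_half_length fH"
    and p: "0 \<le> p" "p \<le> 1" and s: "0 \<le> s" and lam: "0 \<le> lam"
  shows "laplace_interference m lam p fH \<alpha> s
    = (LINT h:{0<..}|lborel. stick_laplace_given_length \<alpha> s lam p h * tilde_fH fH h) ^ (m div 2)"
proof -
  let ?law = "typical_stick_law lam p fH"
  define L where "L = (LINT h:{0<..}|lborel. stick_laplace_given_length \<alpha> s lam p h * tilde_fH fH h)"
  have law: "prob_space ?law" "sets ?law = sets stick_space"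
    using typical_stick_law_in_prob_algebra[OF fH] by (simp_all add: space_prob_algebra)
  have [measurable]: "stick_interference \<alpha> \<in> borel_measurable ?law"
    by (subst measurable_cong_sets[OF law(2) refl]) measurable
  have "0 \<le> L"
    unfolding L_def set_lebesgue_integral_def
    using stick_laplace_given_length_bounds[OF _ p(1) s lam] tilde_fH_nonneg[OF fH(2,3,5)]
    by (auto intro!: integral_nonneg split: split_indicator)
  have "laplace_interference m lam p fH \<alpha> s = enn2real (\<integral>\<^sup>+\<omega>.
      ennreal (exp (- s * (\<Sum>k<m div 2. stick_interference \<alpha> (\<omega> k)))) \<partial>PiM {..<m div 2} (\<lambda>_. ?law))"
    unfolding laplace_interference_def typical_config_law_def interference_o_def
    by (rule integral_eq_nn_integral) auto
  also have "\<dots> = L ^ (m div 2)"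
    using nn_integral_PiM_exp_sum[OF law(1) finite_lessThan]
      nn_integral_typical_stick_law[OF fH p s lam] \<open>0 \<le> L\<close>
    by (simp add: L_def ennreal_power)
  finally show ?thesis
    unfolding L_def .
qed

theorem proposition2:
  fixes fH :: "real \<Rightarrow> real" and lam p \<alpha> s \<delta> :: real and m :: nat
  assumes "m \<in> {2, 4}"
    and "fH \<in> borel_measurable borel"
    and "\<And>h. 0 \<le> fH h"
    and "\<And>h. h \<le> 0 \<Longrightarrow> fH h = 0"
    and "integrable lborel fH"
    and "(\<integral>h. fH h \<partial>lborel) = 1"
    and "integrable lborel (\<lambda>h. h * fH h)"
    and "0 < mean_half_length fH"
    and "0 < lam"
    and "0 \<le> p" and "p \<le> 1"
    and "2 < \<alpha>"
    and "\<delta> = 2 / \<alpha>"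
    and "0 < s"
  shows "laplace_interference m lam p fH \<alpha> s =
    (LINT h:{0<..}|lborel.
       (1 / (2 * h) * (LINT w:{-h..h}|lborel.
          exp (- lam * p * s powr (\<delta> / 2) *
            (LINT v:{(- w - h) * s powr (- \<delta> / 2)..(- w + h) * s powr (- \<delta> / 2)}|lborel.
               1 / (1 + \<bar>v\<bar> powr (2 / \<delta>))))))
       * tilde_fH fH h) ^ (m div 2)"
proof -
  have "0 < \<alpha>"
    using assms(12) by simp
  have "laplace_interference m lam p fH \<alpha> s
      = (LINT h:{0<..}|lborel. stick_laplace_given_length \<alpha> s lam p h * tilde_fH fH h) ^ (m div 2)"
    using assms by (intro laplace_interference_eq_power) auto
  then show ?thesis
    unfolding stick_laplace_given_length_eq[OF \<open>0 < \<alpha>\<close> assms(13,14)] .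
qed

end
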